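(* Let $q\ge3$ be prime and let $T\subseteq\mathbb{F}_q$ have size $\ell\le q-1$. If $2\le\ell\le 2q/3$, then $T$ is $\delta$-mixing for some $\delta\ge\log_q(16/13)$. Otherwise, $T$ is $\delta$-mixing for some $\delta\ge\log_q\left(\frac{\ell^2}{q^2-3\ell(q-\ell)}\right)$.
   Context: For a prime power $q$ and $\delta\ge 0$ (or any real $\delta$), a set $T\subseteq\mathbb{F}_q$ is $\delta$-mixing if for all $\alpha,\beta,\gamma\in\mathbb{F}_q$ with $\alpha,\beta\neq0$, $\Pr[\alpha X+\beta X'\in T+\gamma]\le q^{-\delta}$, where $X,X'$ are independent and uniform on $T$ and $T+\gamma=\{t+\gamma:t\in T\}$. *)

theory Defs
  imports Complex_Main "HOL-Library.Cardinality" "HOL-Computational_Algebra.Primes"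
begin

text \<open>The finite field F_q is modelled by a finite field type 'a with CARD('a) = q.
  delta-mixing: for all alpha, beta nonzero and all gamma, the probability that
  alpha X + beta X' lies in T + gamma (X, X' independent uniform on T) is at most q powr (-delta).\<close>

definition mixing :: "'a::{field,finite} set \<Rightarrow> real \<Rightarrow> bool" where
  "mixing T \<delta> \<longleftrightarrow>
     (\<forall>\<alpha> \<beta> \<gamma> :: 'a. \<alpha> \<noteq> 0 \<longrightarrow> \<beta> \<noteq> 0 \<longrightarrow>
        real (card {(x, x'). x \<in> T \<and> x' \<in> T \<and> \<alpha> * x + \<beta> * x' \<in> (\<lambda>t. t + \<gamma>) ` T})
          / (real (card T))^2
        \<le> real (card (UNIV :: 'a set)) powr (- \<delta>))"

end

theory Submission
  imports Defs "HOL-Number_Theory.Residues"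
begin

text \<open>Rescaling by \<open>\<alpha>\<close> and \<open>\<beta>\<close>, the probability in question is \<open>\<Sum>\<^sub>z\<^sub>\<in>\<^sub>S r(z) / \<ell>\<^sup>2\<close>, where
  \<open>r(z)\<close> counts the representations \<open>z = a + b\<close> with \<open>a \<in> \<alpha>T\<close>, \<open>b \<in> \<beta>T\<close> and \<open>S = T + \<gamma>\<close>;
  all three sets have \<open>\<ell>\<close> elements and \<open>\<Sum>\<^sub>z r(z) = \<ell>\<^sup>2\<close>. It therefore suffices to show
  that many representations fall outside \<open>S\<close>. In general, \<open>r(z) \<ge> 2\<ell> - q\<close> for every \<open>z\<close>
  by pigeonhole, which gives the second bound. For \<open>\<ell> \<le> 2q/3\<close>, Pollard's theorem
  \<open>\<Sum>\<^sub>z min(r(z), t) \<ge> t(2\<ell> - t)\<close> with \<open>t = \<lfloor>\<ell>/2\<rfloor>\<close> forces at least \<open>t(\<ell> - t) \<ge> 3\<ell>\<^sup>2/16\<close>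
  representations outside \<open>S\<close>. Pollard's theorem is proved by induction on \<open>|B|\<close> using
  Dyson's \<open>e\<close>-transform, the primality of \<open>q\<close> guaranteeing a proper transform.\<close>

definition reps :: "('a::plus \<times> 'a) set \<Rightarrow> 'a \<Rightarrow> nat" where
  "reps P z = card {p \<in> P. fst p + snd p = z}"

lemma sum_reps: "(\<Sum>z\<in>S. reps P z) = card {p \<in> P. fst p + snd p \<in> S}"
  for P :: "('a::{plus,finite} \<times> 'a) set"
proof -
  have "{p \<in> P. fst p + snd p \<in> S} = (\<Union>z\<in>S. {p \<in> P. fst p + snd p = z})" by auto
  then show ?thesis
    unfolding reps_def by (subst card_UN_disjoint[symmetric]) auto
qed

lemma sum_reps_UNIV: "(\<Sum>z\<in>UNIV. reps P z) = card P"
  for P :: "('a::{plus,finite} \<times> 'a) set"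
  by (simp add: sum_reps)

lemma sum_reps_Compl: "(\<Sum>z\<in>S. reps P z) + (\<Sum>z\<in>-S. reps P z) = card P"
  for P :: "('a::{plus,finite} \<times> 'a) set"
  by (subst sum.union_disjoint[symmetric]) (auto simp: sum_reps_UNIV)

lemma reps_Un_disjoint: "P \<inter> Q = {} \<Longrightarrow> reps (P \<union> Q) z = reps P z + reps Q z"
  for P Q :: "('a::{plus,finite} \<times> 'a) set"
  unfolding reps_def by (subst card_Un_disjoint[symmetric]) (auto intro: arg_cong[where f = card])

lemma reps_times_le_card_right: "reps (A \<times> B) z \<le> card B"
  for A B :: "'a::{ab_group_add,finite} set"
proof -
  have "inj_on snd {p \<in> A \<times> B. fst p + snd p = z}"
    by (rule inj_onI) (metis (mono_tags, lifting) add_right_cancel mem_Collect_eq prod_eq_iff)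
  then show ?thesis
    unfolding reps_def by (rule card_inj_on_le) auto
qed

lemma card_le_reps_times: "card A + card B \<le> CARD('a) + reps (A \<times> B) z"
  for A B :: "'a::{ab_group_add,finite} set"
proof -
  let ?C = "(\<lambda>b. z - b) ` B"
  have "card ?C = card B" by (rule card_image) (simp add: inj_on_def)
  moreover have "card A + card ?C = card (A \<union> ?C) + card (A \<inter> ?C)"
    by (rule card_Un_Int) auto
  moreover have "card (A \<union> ?C) \<le> CARD('a)" by (rule card_mono) auto
  moreover have "card (A \<inter> ?C) \<le> reps (A \<times> B) z"
    unfolding reps_def
    by (rule card_inj_on_le[where f = "\<lambda>a. (a, z - a)"]) (auto simp: inj_on_def)
  ultimately show ?thesis by linarith
qed

definition dyson_left :: "'a::plus set \<Rightarrow> 'a set \<Rightarrow> 'a \<Rightarrow> 'a set" where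
  "dyson_left A B e = A \<union> (\<lambda>b. b + e) ` B"

definition dyson_right :: "'a::plus set \<Rightarrow> 'a set \<Rightarrow> 'a \<Rightarrow> 'a set" where
  "dyson_right A B e = {b \<in> B. b + e \<in> A}"

lemma card_dyson: "card (dyson_left A B e) + card (dyson_right A B e) = card A + card B"
  for A B :: "'a::{ab_group_add,finite} set"
proof -
  have "A \<inter> (\<lambda>b. b + e) ` B = (\<lambda>b. b + e) ` dyson_right A B e"
    by (auto simp: dyson_right_def)
  moreover have "card ((\<lambda>b. b + e) ` X) = card X" for X :: "'a set"
    by (rule card_image) (simp add: inj_on_def)
  ultimately show ?thesis
    using card_Un_Int[of A "(\<lambda>b. b + e) ` B"] by (simp add: dyson_left_def)
qed

text \<open>The map \<open>(x, y) \<mapsto> (y + e, x - e)\<close> moves the pairs with \<open>x \<notin> A\<close> back into \<open>A \<times> B\<close>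
  without changing the sum.\<close>
lemma reps_dyson_le: "reps (dyson_left A B e \<times> dyson_right A B e) z \<le> reps (A \<times> B) z"
  for A B :: "'a::{ab_group_add,finite} set"
proof -
  define f where "f = (\<lambda>(x, y). if x \<in> A then (x, y) else (y + e, x - e))"
  let ?S = "{p \<in> dyson_left A B e \<times> dyson_right A B e. fst p + snd p = z}"
  have "inj_on f ?S"
  proof (rule inj_onI)
    fix p p' assume "p \<in> ?S" "p' \<in> ?S" and eq: "f p = f p'"
    moreover obtain x y x' y' where [simp]: "p = (x, y)" "p' = (x', y')" by fastforce
    ultimately have "y + e \<in> A" "y' + e \<in> A" by (simp_all add: dyson_right_def)
    with eq show "p = p'"
      by (cases "x \<in> A"; cases "x' \<in> A") (auto simp: f_def)
  qed
  moreover have "f ` ?S \<subseteq> {p \<in> A \<times> B. fst p + snd p = z}"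
  proof (rule image_subsetI)
    fix p assume "p \<in> ?S"
    moreover obtain x y where [simp]: "p = (x, y)" by fastforce
    ultimately show "f p \<in> {p \<in> A \<times> B. fst p + snd p = z}"
      by (cases "x \<in> A") (auto simp: f_def dyson_left_def dyson_right_def algebra_simps)
  qed
  ultimately show ?thesis
    unfolding reps_def by (intro card_inj_on_le) auto
qed

lemma reps_dyson_complement_le:
  "reps (A \<times> B - (A - (\<lambda>b. b + e) ` B) \<times> (B - dyson_right A B e)) z \<le> card (dyson_right A B e)"
  for A B :: "'a::{ab_group_add,finite} set"
proof -
  let ?B' = "dyson_right A B e"
  define g where "g = (\<lambda>(x, y). if y \<in> ?B' then y else x - e)"
  let ?S = "{p \<in> A \<times> B - (A - (\<lambda>b. b + e) ` B) \<times> (B - ?B'). fst p + snd p = z}"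
  have cross: "y' \<in> ?B'" if "x \<in> A" "y' \<in> B" "x + y = x' + y'" "y = x' - e" for x y x' y'
  proof -
    from that(3,4) have "y' + e = x" by (simp add: algebra_simps)
    with that(1,2) show ?thesis by (simp add: dyson_right_def)
  qed
  have "inj_on g ?S"
  proof (rule inj_onI)
    fix p p' assume "p \<in> ?S" "p' \<in> ?S" and eq: "g p = g p'"
    moreover obtain x y x' y' where [simp]: "p = (x, y)" "p' = (x', y')" by fastforce
    ultimately have mem: "x \<in> A" "y \<in> B" "x' \<in> A" "y' \<in> B" and sum: "x + y = x' + y'"
      by auto
    show "p = p'"
    proof (cases "y \<in> ?B'"; cases "y' \<in> ?B'")
      assume "y \<in> ?B'" "y' \<in> ?B'"
      with eq sum show ?thesis by (simp add: g_def)
    next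
      assume "y \<notin> ?B'" "y' \<notin> ?B'"
      with eq sum show ?thesis by (simp add: g_def)
    next
      assume "y \<in> ?B'" "y' \<notin> ?B'"
      with eq cross[OF mem(1,4) sum] show ?thesis by (simp add: g_def)
    next
      assume "y \<notin> ?B'" "y' \<in> ?B'"
      with eq cross[OF mem(3,2) sum[symmetric]] show ?thesis by (simp add: g_def)
    qed
  qed
  moreover have "g ` ?S \<subseteq> ?B'"
  proof (rule image_subsetI)
    fix p assume "p \<in> ?S"
    moreover obtain x y where [simp]: "p = (x, y)" by fastforce
    ultimately show "g p \<in> ?B'"
      by (cases "y \<in> ?B'") (auto simp: g_def dyson_right_def)
  qed
  ultimately show ?thesis
    unfolding reps_def by (intro card_inj_on_le) auto
qed

lemma CHAR_eq_CARD_if_prime: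
  assumes "prime CARD('a::{field,finite})"
  shows "CHAR('a) = CARD('a)"
  using assms CHAR_dvd_CARD[where 'a = 'a] CHAR_not_1'[where 'a = 'a]
  by (metis One_nat_def prime_nat_iff)

text \<open>Summing over \<open>A\<close> and over its translate \<open>A + d = A\<close> gives \<open>|A| d = 0\<close>, so the characteristic
  \<open>CARD('a)\<close> divides \<open>|A|\<close>.\<close>
lemma translation_closed_eq_UNIV:
  fixes A :: "'a::{field,finite} set"
  assumes "prime CARD('a)" and "A \<noteq> {}" and "d \<noteq> 0" and closed: "\<And>a. a \<in> A \<Longrightarrow> a + d \<in> A"
  shows "A = UNIV"
proof -
  have inj: "inj_on (\<lambda>a. a + d) A" by (simp add: inj_on_def)
  then have "(\<lambda>a. a + d) ` A = A" using closed by (intro endo_inj_surj) auto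
  then have "(\<Sum>a\<in>A. a) = (\<Sum>a\<in>A. a + d)"
    using sum.reindex[OF inj, of id] by simp
  then have "of_nat (card A) * d = 0" by (simp add: sum.distrib)
  then have "CARD('a) dvd card A"
    using assms(1,3) by (simp add: of_nat_eq_0_iff_char_dvd CHAR_eq_CARD_if_prime)
  moreover have "0 < card A" "card A \<le> CARD('a)"
    using assms(2) by (simp_all add: card_gt_0_iff card_mono)
  ultimately show ?thesis
    by (metis card_eq_UNIV_imp_eq_UNIV dvd_imp_le finite le_antisym)
qed

lemma exists_proper_dyson_right:
  fixes A B :: "'a::{field,finite} set"
  assumes "prime CARD('a)" and "A \<noteq> {}" and "A \<noteq> UNIV" and "2 \<le> card B"
  shows "\<exists>e. 0 < card (dyson_right A B e) \<and> card (dyson_right A B e) < card B"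
proof (rule ccontr)
  assume no_proper: "\<not> ?thesis"
  obtain b1 b2 where b: "b1 \<in> B" "b2 \<in> B" "b1 \<noteq> b2"
    using assms(4) card_le_Suc0_iff_eq[of B] by fastforce
  have "a + (b1 - b2) \<in> A" if "a \<in> A" for a
  proof -
    have "b2 \<in> dyson_right A B (a - b2)" using that b by (simp add: dyson_right_def)
    then have "0 < card (dyson_right A B (a - b2))" by (auto simp: card_gt_0_iff)
    with no_proper have "\<not> card (dyson_right A B (a - b2)) < card B" by blast
    moreover have sub: "dyson_right A B (a - b2) \<subseteq> B" by (auto simp: dyson_right_def)
    ultimately have "dyson_right A B (a - b2) = B"
      using card_mono[OF _ sub] by (intro card_subset_eq) auto
    then have "b1 + (a - b2) \<in> A" using b(1) by (auto simp: dyson_right_def)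
    then show ?thesis by (simp add: algebra_simps)
  qed
  then have "A = UNIV"
    using translation_closed_eq_UNIV[OF assms(1,2), of "b1 - b2"] b(3) by simp
  with assms(3) show False ..
qed

lemma card_Diff_translate:
  "card (A - (\<lambda>b. b + e) ` B) = card A - card (dyson_right A B e)"
  for A B :: "'a::{ab_group_add,finite} set"
proof -
  have "A \<inter> (\<lambda>b. b + e) ` B = (\<lambda>b. b + e) ` dyson_right A B e"
    by (auto simp: dyson_right_def)
  moreover have "card ((\<lambda>b. b + e) ` dyson_right A B e) = card (dyson_right A B e)"
    by (rule card_image) (simp add: inj_on_def)
  ultimately show ?thesis by (simp add: card_Diff_subset_Int)
qed

lemma sum_min_reps_Diff:
  fixes P Q :: "('a::{plus,finite} \<times> 'a) set"
  assumes "P \<subseteq> Q" and "\<And>z. reps (Q - P) z \<le> s" and "s \<le> t"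
  shows "card (Q - P) + (\<Sum>z\<in>UNIV. min (reps P z) (t - s)) \<le> (\<Sum>z\<in>UNIV. min (reps Q z) t)"
proof -
  have "reps (Q - P) z + min (reps P z) (t - s) \<le> min (reps Q z) t" for z
  proof -
    have "Q = (Q - P) \<union> P" using assms(1) by blast
    then have "reps Q z = reps (Q - P) z + reps P z"
      by (metis Diff_disjoint inf_commute reps_Un_disjoint)
    with assms(2)[of z] assms(3) show ?thesis by linarith
  qed
  then have "(\<Sum>z\<in>UNIV. reps (Q - P) z + min (reps P z) (t - s)) \<le> (\<Sum>z\<in>UNIV. min (reps Q z) t)"
    by (rule sum_mono)
  then show ?thesis by (simp add: sum.distrib sum_reps_UNIV)
qed

lemma pollard_arith:
  fixes a b s t :: nat
  assumes "s \<le> t" "t \<le> a" "t \<le> b"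
  shows "t * (a + b - t) = (a * b - (a - s) * (b - s)) + (t - s) * ((a - s) + (b - s) - (t - s))"
proof -
  obtain u x y where "t = s + u" "a = s + u + x" "b = s + u + y"
    using assms by (metis le_Suc_ex)
  then show ?thesis by (simp add: algebra_simps)
qed

lemma sum_min_reps_dyson_complement:
  fixes A B :: "'a::{ab_group_add,finite} set" and e :: 'a
  defines "s \<equiv> card (dyson_right A B e)"
  assumes "s \<le> t"
  shows "card A * card B - (card A - s) * (card B - s)
           + (\<Sum>z\<in>UNIV. min (reps ((A - (\<lambda>b. b + e) ` B) \<times> (B - dyson_right A B e)) z) (t - s))
         \<le> (\<Sum>z\<in>UNIV. min (reps (A \<times> B) z) t)"
proof -
  let ?P = "(A - (\<lambda>b. b + e) ` B) \<times> (B - dyson_right A B e)"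
  have sub: "?P \<subseteq> A \<times> B" by blast
  have "card ?P = (card A - s) * (card B - s)"
    by (simp add: card_cartesian_product card_Diff_translate card_Diff_subset s_def
        dyson_right_def)
  then have "card (A \<times> B - ?P) = card A * card B - (card A - s) * (card B - s)"
    by (simp add: card_Diff_subset[OF _ sub] card_cartesian_product)
  moreover have "card (A \<times> B - ?P) + (\<Sum>z\<in>UNIV. min (reps ?P z) (t - s))
                   \<le> (\<Sum>z\<in>UNIV. min (reps (A \<times> B) z) t)"
    using sub reps_dyson_complement_le assms(2) unfolding s_def by (rule sum_min_reps_Diff)
  ultimately show ?thesis by simp
qed

theorem pollard:
  fixes A B :: "'a::{field,finite} set"
  assumes "prime CARD('a)"
    and "t \<le> card A" and "t \<le> card B" and "card A + card B \<le> CARD('a) + t"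
  shows "t * (card A + card B - t) \<le> (\<Sum>z\<in>UNIV. min (reps (A \<times> B) z) t)"
  using assms(2-)
proof (induction "card B" arbitrary: A B t rule: less_induct)
  case less
  consider "t = card B" | "t = 0" | "0 < t" "t < card B" using less.prems by linarith
  then show ?case
  proof cases
    case 1
    then have "(\<Sum>z\<in>UNIV. min (reps (A \<times> B) z) t) = (\<Sum>z\<in>UNIV. reps (A \<times> B) z)"
      using reps_times_le_card_right[of A B] by (intro sum.cong) (simp_all add: min_absorb1)
    then show ?thesis using 1 by (simp add: sum_reps_UNIV card_cartesian_product)
  next
    case 2
    then show ?thesis by simp
  next
    case 3
    with less.prems have "A \<noteq> {}" "A \<noteq> UNIV" "2 \<le> card B" by auto
    then obtain e where e: "0 < card (dyson_right A B e)" "card (dyson_right A B e) < card B"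
      using exists_proper_dyson_right[OF assms(1)] by blast
    define s where "s = card (dyson_right A B e)"
    show ?thesis
    proof (cases "t \<le> s")
      case True
      have sizes: "card (dyson_left A B e) + s = card A + card B"
        using card_dyson by (simp add: s_def)
      then have "t * (card A + card B - t) = t * (card (dyson_left A B e) + s - t)" by simp
      also have "\<dots> \<le> (\<Sum>z\<in>UNIV. min (reps (dyson_left A B e \<times> dyson_right A B e) z) t)"
        using less.hyps[of "dyson_right A B e" t "dyson_left A B e"] e(2) True less.prems sizes
        unfolding s_def by simp
      also have "\<dots> \<le> (\<Sum>z\<in>UNIV. min (reps (A \<times> B) z) t)"
        by (intro sum_mono min.mono reps_dyson_le order.refl)
      finally show ?thesis .
    next
      case False
      let ?A1 = "A - (\<lambda>b. b + e) ` B" and ?B1 = "B - dyson_right A B e"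
      have sizes: "card ?A1 = card A - s" "card ?B1 = card B - s"
        by (simp_all add: card_Diff_translate card_Diff_subset s_def dyson_right_def)
      have "t * (card A + card B - t)
              = (card A * card B - (card A - s) * (card B - s))
                + (t - s) * (card ?A1 + card ?B1 - (t - s))"
        using pollard_arith[of s t "card A" "card B"] False less.prems sizes by simp
      also have "\<dots> \<le> (card A * card B - (card A - s) * (card B - s))
                      + (\<Sum>z\<in>UNIV. min (reps (?A1 \<times> ?B1) z) (t - s))"
        using less.hyps[of ?B1 "t - s" ?A1] e less.prems sizes False unfolding s_def by simp
      also have "\<dots> \<le> (\<Sum>z\<in>UNIV. min (reps (A \<times> B) z) t)"
        using False unfolding s_def by (intro sum_min_reps_dyson_complement) simp
      finally show ?thesis .
    qed
  qed
qed

lemma sum_reps_le_pollard: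
  fixes A B S :: "'a::{field,finite} set"
  assumes "prime CARD('a)"
    and "t \<le> card A" and "t \<le> card B" and "card A + card B \<le> CARD('a) + t"
  shows "(\<Sum>z\<in>S. reps (A \<times> B) z) + t * (card A + card B - t) \<le> card A * card B + t * card S"
proof -
  have "t * (card A + card B - t) \<le> (\<Sum>z\<in>UNIV. min (reps (A \<times> B) z) t)"
    using pollard assms by blast
  also have "\<dots> = (\<Sum>z\<in>S. min (reps (A \<times> B) z) t) + (\<Sum>z\<in>-S. min (reps (A \<times> B) z) t)"
    by (subst sum.union_disjoint[symmetric]) auto
  also have "\<dots> \<le> (\<Sum>z\<in>S. t) + (\<Sum>z\<in>-S. reps (A \<times> B) z)"
    by (intro add_mono sum_mono) auto
  finally show ?thesis
    using sum_reps_Compl[where S = S and P = "A \<times> B"] by (simp add: card_cartesian_product mult.commute)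
qed

lemma sum_reps_le_pigeonhole:
  fixes A B S :: "'a::{ab_group_add,finite} set"
  shows "int (\<Sum>z\<in>S. reps (A \<times> B) z)
           \<le> int (card A * card B) - (int CARD('a) - int (card S)) * (int (card A + card B) - int CARD('a))"
proof -
  have "card S \<le> CARD('a)" by (simp add: card_mono)
  then have "int (card (-S)) = int CARD('a) - int (card S)"
    by (simp add: Compl_eq_Diff_UNIV card_Diff_subset of_nat_diff)
  then have "(int CARD('a) - int (card S)) * (int (card A + card B) - int CARD('a))
               = (\<Sum>z\<in>-S. int (card A + card B) - int CARD('a))"
    by simp
  also have "\<dots> \<le> (\<Sum>z\<in>-S. int (reps (A \<times> B) z))"
  proof (rule sum_mono)
    fix z
    show "int (card A + card B) - int CARD('a) \<le> int (reps (A \<times> B) z)"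
      using card_le_reps_times[of A B z] by linarith
  qed
  also have "\<dots> = int (\<Sum>z\<in>-S. reps (A \<times> B) z)" by simp
  also have "\<dots> = int (card A * card B) - int (\<Sum>z\<in>S. reps (A \<times> B) z)"
    unfolding card_cartesian_product[symmetric] sum_reps_Compl[where S = S, symmetric] by simp
  finally show ?thesis by simp
qed

lemma card_image_mult_left: "\<alpha> \<noteq> 0 \<Longrightarrow> card ((*) \<alpha> ` T) = card T"
  for \<alpha> :: "'a::field"
  by (simp add: card_image inj_on_def)

lemma card_solutions_eq_sum_reps:
  fixes T S :: "'a::{field,finite} set"
  assumes "\<alpha> \<noteq> 0" and "\<beta> \<noteq> 0"
  shows "card {(x, x'). x \<in> T \<and> x' \<in> T \<and> \<alpha> * x + \<beta> * x' \<in> S}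
           = (\<Sum>z\<in>S. reps ((*) \<alpha> ` T \<times> (*) \<beta> ` T) z)"
proof -
  let ?X = "{(x, x'). x \<in> T \<and> x' \<in> T \<and> \<alpha> * x + \<beta> * x' \<in> S}"
  let ?h = "\<lambda>(x, x'). (\<alpha> * x, \<beta> * x')"
  have "inj_on ?h ?X" using assms by (auto simp: inj_on_def)
  then have "card ?X = card (?h ` ?X)" by (simp add: card_image)
  also have "?h ` ?X = {p \<in> (*) \<alpha> ` T \<times> (*) \<beta> ` T. fst p + snd p \<in> S}"
  proof
    show "?h ` ?X \<subseteq> {p \<in> (*) \<alpha> ` T \<times> (*) \<beta> ` T. fst p + snd p \<in> S}" by auto
  next
    show "{p \<in> (*) \<alpha> ` T \<times> (*) \<beta> ` T. fst p + snd p \<in> S} \<subseteq> ?h ` ?X"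
    proof
      fix p assume "p \<in> {p \<in> (*) \<alpha> ` T \<times> (*) \<beta> ` T. fst p + snd p \<in> S}"
      then obtain x x' where "x \<in> T" "x' \<in> T" "p = (\<alpha> * x, \<beta> * x')" "\<alpha> * x + \<beta> * x' \<in> S"
        by auto
      then show "p \<in> ?h ` ?X" by (intro image_eqI[where x = "(x, x')"]) auto
    qed
  qed
  finally show ?thesis by (simp add: sum_reps)
qed

lemma mixing_if_card_solutions_le:
  fixes T :: "'a::{field,finite} set"
  assumes "T \<noteq> {}" and "0 < c"
    and bound: "\<And>\<alpha> \<beta> \<gamma>. \<alpha> \<noteq> 0 \<Longrightarrow> \<beta> \<noteq> 0 \<Longrightarrow>
      real (card {(x, x'). x \<in> T \<and> x' \<in> T \<and> \<alpha> * x + \<beta> * x' \<in> (\<lambda>t. t + \<gamma>) ` T})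
        \<le> c * real (card T) ^ 2"
  shows "mixing T (log CARD('a) (1 / c))"
  unfolding mixing_def
proof (intro allI impI)
  fix \<alpha> \<beta> \<gamma> :: 'a assume "\<alpha> \<noteq> 0" "\<beta> \<noteq> 0"
  have "card {0, 1 :: 'a} \<le> CARD('a)" by (rule card_mono) auto
  then have q: "1 < real CARD('a)" by simp
  have "0 < real (card T) ^ 2" using assms(1) by (simp add: card_gt_0_iff)
  with bound[OF \<open>\<alpha> \<noteq> 0\<close> \<open>\<beta> \<noteq> 0\<close>, of \<gamma>]
  have "real (card {(x, x'). x \<in> T \<and> x' \<in> T \<and> \<alpha> * x + \<beta> * x' \<in> (\<lambda>t. t + \<gamma>) ` T})
          / real (card T) ^ 2 \<le> c"
    by (simp add: divide_simps)
  also have "c = real CARD('a) powr - log CARD('a) (1 / c)"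
    using q assms(2) by (simp add: powr_minus powr_log_cancel)
  finally show "real (card {(x, x'). x \<in> T \<and> x' \<in> T \<and> \<alpha> * x + \<beta> * x' \<in> (\<lambda>t. t + \<gamma>) ` T})
          / real (card T) ^ 2 \<le> real (card (UNIV :: 'a set)) powr - log CARD('a) (1 / c)" .
qed

lemma floor_ceil_half_product_bound:
  fixes l :: nat
  assumes "2 \<le> l"
  shows "3 * (l * l) \<le> 16 * (l div 2 * (l - l div 2))"
proof (cases "even l")
  case True
  then obtain t where "l = 2 * t" by blast
  then show ?thesis by (simp add: algebra_simps)
next
  case False
  then obtain t where l: "l = 2 * t + 1" using oddE by blast
  with assms have "1 \<le> t * t" by simp
  with l show ?thesis by (simp add: algebra_simps)
qed

lemma mixing_16_13:
  fixes T :: "'a::{field,finite} set"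
  assumes "prime CARD('a)" and "2 \<le> card T" and "3 * card T \<le> 2 * CARD('a)"
  shows "mixing T (log CARD('a) (16 / 13))"
proof -
  define l where "l = card T"
  define t where "t = l div 2"
  have size: "t \<le> l" "l + l \<le> CARD('a) + t"
    using assms(3) unfolding l_def t_def by linarith+
  have "mixing T (log CARD('a) (1 / (13 / 16)))"
  proof (rule mixing_if_card_solutions_le)
    fix \<alpha> \<beta> \<gamma> :: 'a assume "\<alpha> \<noteq> 0" "\<beta> \<noteq> 0"
    let ?N = "card {(x, x'). x \<in> T \<and> x' \<in> T \<and> \<alpha> * x + \<beta> * x' \<in> (\<lambda>t. t + \<gamma>) ` T}"
    have "?N + t * (l + l - t) \<le> l * l + t * l"
      using sum_reps_le_pollard[OF assms(1), of t "(*) \<alpha> ` T" "(*) \<beta> ` T" "(\<lambda>t. t + \<gamma>) ` T"]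
        card_solutions_eq_sum_reps[OF \<open>\<alpha> \<noteq> 0\<close> \<open>\<beta> \<noteq> 0\<close>] size \<open>\<alpha> \<noteq> 0\<close> \<open>\<beta> \<noteq> 0\<close>
      by (simp add: card_image card_image_mult_left l_def)
    moreover have "t * (l + l - t) = t * l + t * (l - t)"
      using size(1) by (simp add: diff_mult_distrib2 add_mult_distrib2)
    ultimately have "16 * ?N \<le> 13 * (l * l)"
      using floor_ceil_half_product_bound[OF assms(2)] unfolding l_def t_def by linarith
    then show "real ?N \<le> 13 / 16 * real (card T) ^ 2"
      unfolding l_def by (simp add: power2_eq_square flip: of_nat_mult)
  qed (use assms in auto)
  then show ?thesis by simp
qed

lemma mixing_pigeonhole:
  fixes T :: "'a::{field,finite} set"
  assumes "T \<noteq> {}"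
  defines "l \<equiv> real (card T)" and "q \<equiv> real CARD('a)"
  shows "mixing T (log q (l\<^sup>2 / (q\<^sup>2 - 3 * l * (q - l))))"
proof -
  define D where "D = q\<^sup>2 - 3 * l * (q - l)"
  have "0 < l" using assms(1) by (simp add: l_def card_gt_0_iff)
  moreover have "D = (q - 3 / 2 * l)\<^sup>2 + 3 / 4 * l\<^sup>2"
    by (simp add: D_def power2_eq_square algebra_simps)
  ultimately have "0 < D" by (simp add: add_nonneg_pos)
  have "mixing T (log q (1 / (D / l\<^sup>2)))"
    unfolding q_def
  proof (rule mixing_if_card_solutions_le)
    fix \<alpha> \<beta> \<gamma> :: 'a assume "\<alpha> \<noteq> 0" "\<beta> \<noteq> 0"
    let ?N = "card {(x, x'). x \<in> T \<and> x' \<in> T \<and> \<alpha> * x + \<beta> * x' \<in> (\<lambda>t. t + \<gamma>) ` T}"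
    have "int ?N \<le> int (card T * card T)
                     - (int CARD('a) - int (card T)) * (int (card T + card T) - int CARD('a))"
      using sum_reps_le_pigeonhole[of "(*) \<alpha> ` T" "(*) \<beta> ` T" "(\<lambda>t. t + \<gamma>) ` T"]
        card_solutions_eq_sum_reps[OF \<open>\<alpha> \<noteq> 0\<close> \<open>\<beta> \<noteq> 0\<close>] \<open>\<alpha> \<noteq> 0\<close> \<open>\<beta> \<noteq> 0\<close>
      by (simp add: card_image card_image_mult_left)
    then have "real_of_int (int ?N) \<le> real_of_int (int (card T * card T)
                 - (int CARD('a) - int (card T)) * (int (card T + card T) - int CARD('a)))"
      by (simp only: of_int_le_iff)
    then have "real ?N \<le> l * l - (q - l) * (2 * l - q)"
      unfolding l_def q_def by simp
    also have "\<dots> = D" by (simp add: D_def power2_eq_square algebra_simps)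
    also have "\<dots> = D / l\<^sup>2 * real (card T) ^ 2" using \<open>0 < l\<close> by (simp add: l_def[symmetric])
    finally show "real ?N \<le> D / l\<^sup>2 * real (card T) ^ 2" .
  qed (use assms \<open>0 < D\<close> \<open>0 < l\<close> in auto)
  then show ?thesis by (simp add: D_def)
qed

theorem corollary3p3:
  fixes T :: "'a::{field,finite} set" and l :: nat
  assumes "prime CARD('a)" and "CARD('a) \<ge> 3"
    and "T \<noteq> {}" and "card T = l" and "l \<le> CARD('a) - 1"
  shows "(2 \<le> l \<and> real l \<le> 2 * real CARD('a) / 3 \<longrightarrow>
            (\<exists>\<delta>. \<delta> \<ge> log (real CARD('a)) (16 / 13) \<and> mixing T \<delta>))
       \<and> (\<not> (2 \<le> l \<and> real l \<le> 2 * real CARD('a) / 3) \<longrightarrow>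
            (\<exists>\<delta>. \<delta> \<ge> log (real CARD('a))
                   ((real l)^2 / ((real CARD('a))^2 - 3 * real l * (real CARD('a) - real l)))
                 \<and> mixing T \<delta>))"
proof (intro conjI impI)
  assume small: "2 \<le> l \<and> real l \<le> 2 * real CARD('a) / 3"
  then have "real (3 * l) \<le> real (2 * CARD('a))" by simp
  then have "3 * card T \<le> 2 * CARD('a)" using assms(4) by (simp only: of_nat_le_iff)
  then have "mixing T (log CARD('a) (16 / 13))"
    using mixing_16_13 assms(1,4) small by blast
  then show "\<exists>\<delta>. \<delta> \<ge> log (real CARD('a)) (16 / 13) \<and> mixing T \<delta>" by blast
next
  show "\<exists>\<delta>. \<delta> \<ge> log (real CARD('a))
                   ((real l)^2 / ((real CARD('a))^2 - 3 * real l * (real CARD('a) - real l)))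
                 \<and> mixing T \<delta>"
    using mixing_pigeonhole[OF assms(3)] assms(4) by blast
qed

end
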